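(* Let $r\ge2$ and let $0^r$ denote the consecutive pattern consisting of $r$ zeros. Then $|\mathbf{I}_n(0^r)|=n!$ for $1\le n<r$, and for $n\ge r$, $$|\mathbf{I}_n(0^r)|=\sum_{j=1}^{r-1}(n-j)\,|\mathbf{I}_{n-j}(0^r)|.$$
   Context: An inversion sequence of length $n$ is an integer sequence $e=e_1\dots e_n$ with $0\le e_i<i$ for all $i$; $\mathbf{I}_n$ denotes the set of these. $e$ avoids the consecutive pattern $0^r$ if there is no $i$ with $e_i=e_{i+1}=\dots=e_{i+r-1}$; $\mathbf{I}_n(0^r)$ is the set of $e\in\mathbf{I}_n$ avoiding $0^r$. *)

theory Defs
  imports Main
begin

text \<open>Inversion sequences of length n, as lists e with e!i < i+1 (0-indexed,
  i.e. 0 \<le> e_{i+1} < i+1 in the paper's 1-indexed convention).\<close>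
definition inv_seqs :: "nat \<Rightarrow> nat list set" where
  "inv_seqs n = {e. length e = n \<and> (\<forall>i<n. e ! i < Suc i)}"

text \<open>e contains the consecutive pattern 0^r: r consecutive equal entries.\<close>
definition contains_const_run :: "nat \<Rightarrow> nat list \<Rightarrow> bool" where
  "contains_const_run r e \<longleftrightarrow>
     (\<exists>i. i + r \<le> length e \<and> (\<forall>k<r. e ! (i + k) = e ! i))"

definition inv_seqs_avoid :: "nat \<Rightarrow> nat \<Rightarrow> nat list set" where
  "inv_seqs_avoid r n = {e \<in> inv_seqs n. \<not> contains_const_run r e}"

end

theory Submission
  imports Defs
begin

text \<open>Every nonempty sequence ends in a maximal constant block: \<open>e = p @ v\<^sup>j\<close> with \<open>j \<ge> 1\<close> and
  \<open>last p \<noteq> v\<close>.  Such an \<open>e\<close> contains \<open>0\<^sup>r\<close> iff \<open>p\<close> does or \<open>j \<ge> r\<close>, and it is an inversion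
  sequence iff \<open>p\<close> is one and \<open>v \<le> |p|\<close>.  Hence for \<open>n \<ge> r\<close> the sequences in \<open>I\<^sub>n(0\<^sup>r)\<close> are in
  bijection with the triples \<open>(j, p, v)\<close> where \<open>1 \<le> j < r\<close>, \<open>p \<in> I\<^sub>n\<^sub>-\<^sub>j(0\<^sup>r)\<close> and \<open>v\<close> is one of
  the \<open>n - j\<close> values in \<open>{0..n-j}\<close> other than \<open>last p\<close>.\<close>

lemma ex_final_block:
  assumes "e \<noteq> []"
  shows "\<exists>p j v. e = p @ replicate j v \<and> 0 < j \<and> (p \<noteq> [] \<longrightarrow> last p \<noteq> v)"
  using assms
proof (induction e rule: rev_induct)
  case (snoc x xs)
  show ?case
  proof (cases "xs \<noteq> [] \<and> last xs = x")
    case True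
    then obtain p j where "xs = p @ replicate j x" "0 < j" "p \<noteq> [] \<longrightarrow> last p \<noteq> x"
      using snoc.IH by (metis last_appendR last_replicate not_gr_zero replicate_empty)
    then show ?thesis
      by (intro exI[of _ p] exI[of _ "Suc j"] exI[of _ x]) (simp add: replicate_append_same)
  next
    case False
    then show ?thesis by (intro exI[of _ xs] exI[of _ 1] exI[of _ x]) auto
  qed
qed simp

lemma final_block_unique_of_le:
  assumes eq: "p @ replicate j v = p' @ replicate j' v'" and "0 < j" "j \<le> j'"
    and last_p: "p \<noteq> [] \<longrightarrow> last p \<noteq> v"
  shows "p = p' \<and> j = j' \<and> v = v'"
proof -
  have "v = v'"
    using arg_cong[OF eq, of last] \<open>0 < j\<close> \<open>j \<le> j'\<close> by simp
  moreover have "replicate j' v' = replicate (j' - j) v' @ replicate j v'"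
    using \<open>j \<le> j'\<close> by (simp add: replicate_add[symmetric])
  ultimately have p: "p = p' @ replicate (j' - j) v"
    using eq by simp
  have "j = j'"
  proof (rule ccontr)
    assume "j \<noteq> j'"
    then have "p \<noteq> [] \<and> last p = v"
      using p \<open>j \<le> j'\<close> by simp
    then show False
      using last_p by blast
  qed
  then show ?thesis
    using p \<open>v = v'\<close> by simp
qed

lemma final_block_unique:
  assumes "p @ replicate j v = p' @ replicate j' v'" "0 < j" "0 < j'"
    and "p \<noteq> [] \<longrightarrow> last p \<noteq> v" "p' \<noteq> [] \<longrightarrow> last p' \<noteq> v'"
  shows "p = p' \<and> j = j' \<and> v = v'"
  using final_block_unique_of_le[of p j v p' j' v'] final_block_unique_of_le[of p' j' v' p j v]
    assms by (cases "j \<le> j'") auto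

lemma contains_const_run_append_replicate:
  assumes last_p: "p \<noteq> [] \<longrightarrow> last p \<noteq> v"
  shows "contains_const_run r (p @ replicate j v) \<longleftrightarrow> contains_const_run r p \<or> r \<le> j"
    (is "contains_const_run r ?e \<longleftrightarrow> _")
proof
  assume "contains_const_run r ?e"
  then obtain i where i: "i + r \<le> length p + j" and run: "\<forall>k<r. ?e ! (i + k) = ?e ! i"
    unfolding contains_const_run_def by auto
  consider "i + r \<le> length p" | "length p \<le> i" | "i < length p" "length p < i + r"
    by linarith
  then show "contains_const_run r p \<or> r \<le> j"
  proof cases
    case 1
    then have "\<forall>k<r. p ! (i + k) = p ! i"
      using run by (auto simp: nth_append)
    with 1 show ?thesis
      unfolding contains_const_run_def by blast
  next
    case 2
    with i show ?thesis by simp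
  next
    case 3
    then have nonempty: "p \<noteq> []" "0 < j"
      using i by auto
    \<comment> \<open>the run would cover the last entry of \<open>p\<close> and the first entry of the block\<close>
    have "?e ! (length p - 1) = ?e ! (length p)"
      using run[rule_format, of "length p - 1 - i"] run[rule_format, of "length p - i"] 3
      by simp
    then have "last p = v"
      using nonempty by (simp add: nth_append last_conv_nth)
    with last_p nonempty show ?thesis by blast
  qed
next
  assume "contains_const_run r p \<or> r \<le> j"
  then show "contains_const_run r ?e"
  proof
    assume "contains_const_run r p"
    then obtain i where "i + r \<le> length p" "\<forall>k<r. p ! (i + k) = p ! i"
      unfolding contains_const_run_def by blast
    then show ?thesis
      unfolding contains_const_run_def by (intro exI[of _ i]) (auto simp: nth_append)
  next
    assume "r \<le> j"
    then show ?thesis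
      unfolding contains_const_run_def by (intro exI[of _ "length p"]) (simp add: nth_append)
  qed
qed

lemma inv_seqs_length: "e \<in> inv_seqs n \<Longrightarrow> length e = n"
  by (simp add: inv_seqs_def)

lemma last_inv_seqs_less:
  assumes "e \<in> inv_seqs n" "0 < n"
  shows "last e < n"
proof -
  have bounds: "\<forall>i<n. e ! i < Suc i" and "length e = n"
    using assms by (simp_all add: inv_seqs_def)
  then have "e ! (n - 1) < Suc (n - 1)"
    using bounds[rule_format, of "n - 1"] \<open>0 < n\<close> by simp
  then show ?thesis
    using \<open>0 < n\<close> \<open>length e = n\<close> by (cases "e = []") (simp_all add: last_conv_nth)
qed

lemma append_replicate_in_inv_seqs_iff:
  assumes "0 < j"
  shows "p @ replicate j v \<in> inv_seqs (m + j) \<longleftrightarrow> p \<in> inv_seqs m \<and> v \<le> m"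
proof
  assume e: "p @ replicate j v \<in> inv_seqs (m + j)"
  then have len: "length p = m"
    by (simp add: inv_seqs_def)
  have bound: "(p @ replicate j v) ! i < Suc i" if "i < m + j" for i
    using e that by (simp add: inv_seqs_def)
  have "p ! i < Suc i" if "i < m" for i
    using bound[of i] that len by (simp add: nth_append)
  moreover have "v \<le> m"
    using bound[of m] len assms by (simp add: nth_append)
  ultimately show "p \<in> inv_seqs m \<and> v \<le> m"
    using len by (simp add: inv_seqs_def)
next
  assume "p \<in> inv_seqs m \<and> v \<le> m"
  then show "p @ replicate j v \<in> inv_seqs (m + j)"
    by (auto simp: inv_seqs_def nth_append)
qed

lemma finite_inv_seqs: "finite (inv_seqs n)"
proof -
  have "inv_seqs n \<subseteq> {xs. set xs \<subseteq> {..<n} \<and> length xs = n}"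
    by (auto simp: inv_seqs_def in_set_conv_nth) (metis less_trans_Suc not_less_eq)
  then show ?thesis
    using finite_lists_length_eq[of "{..<n}" n] finite_subset by blast
qed

lemma inv_seqs_Suc: "inv_seqs (Suc m) = (\<lambda>(p, v). p @ [v]) ` (inv_seqs m \<times> {..m})"
proof -
  have "e \<in> (\<lambda>(p, v). p @ [v]) ` (inv_seqs m \<times> {..m})" if "e \<in> inv_seqs (Suc m)" for e
  proof -
    from that obtain p v where "e = p @ [v]"
      by (metis inv_seqs_length length_Suc_conv_rev)
    with that show ?thesis
      using append_replicate_in_inv_seqs_iff[of 1 p v m] by auto
  qed
  then show ?thesis
    using append_replicate_in_inv_seqs_iff[of 1 _ _ m] by auto
qed

lemma card_inv_seqs: "card (inv_seqs n) = fact n"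
proof (induction n)
  case 0
  have "inv_seqs 0 = {[]}"
    by (auto simp: inv_seqs_def)
  then show ?case by simp
next
  case (Suc n)
  have "inj_on (\<lambda>(p, v). p @ [v]) (inv_seqs n \<times> {..n})"
    by (auto simp: inj_on_def)
  then have "card (inv_seqs (Suc n)) = card (inv_seqs n \<times> {..n})"
    by (simp add: inv_seqs_Suc card_image)
  also have "\<dots> = fact (Suc n)"
    using Suc by (simp add: card_cartesian_product)
  finally show ?case .
qed

lemma finite_inv_seqs_avoid: "finite (inv_seqs_avoid r n)"
  by (simp add: inv_seqs_avoid_def finite_inv_seqs)

lemma inv_seqs_avoid_short: "n < r \<Longrightarrow> inv_seqs_avoid r n = inv_seqs n"
  by (auto simp: inv_seqs_avoid_def contains_const_run_def inv_seqs_def)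

definition block_extensions :: "nat \<Rightarrow> nat \<Rightarrow> (nat list \<times> nat) set" where
  "block_extensions r m = (SIGMA p:inv_seqs_avoid r m. {v. v \<le> m \<and> v \<noteq> last p})"

lemma card_block_extensions:
  assumes "0 < m"
  shows "card (block_extensions r m) = m * card (inv_seqs_avoid r m)"
proof -
  have "card {v. v \<le> m \<and> v \<noteq> last p} = m" if "p \<in> inv_seqs_avoid r m" for p
  proof -
    have "last p \<le> m"
      using last_inv_seqs_less[of p m] that assms by (simp add: inv_seqs_avoid_def)
    moreover have "{v. v \<le> m \<and> v \<noteq> last p} = {..m} - {last p}"
      by auto
    ultimately show ?thesis by simp
  qed
  then show ?thesis
    unfolding block_extensions_def
    by (simp add: finite_inv_seqs_avoid)
qed

lemma append_replicate_in_inv_seqs_avoid_iff: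
  assumes "0 < j" "j < r" "r \<le> n" and last_p: "p \<noteq> [] \<longrightarrow> last p \<noteq> v"
  shows "p @ replicate j v \<in> inv_seqs_avoid r n \<longleftrightarrow> (p, v) \<in> block_extensions r (n - j)"
proof -
  have n: "n = (n - j) + j"
    using assms by simp
  have "p \<noteq> []" if "p \<in> inv_seqs (n - j)"
    using inv_seqs_length[OF that] assms by auto
  with last_p have "p \<in> inv_seqs (n - j) \<longrightarrow> last p \<noteq> v"
    by blast
  then show ?thesis
    unfolding inv_seqs_avoid_def block_extensions_def mem_Collect_eq mem_Sigma_iff
    using append_replicate_in_inv_seqs_iff[OF \<open>0 < j\<close>, of p v "n - j"]
      contains_const_run_append_replicate[OF last_p, of r j] \<open>j < r\<close>
    by (subst n) auto
qed

lemma inv_seqs_avoid_decomposition: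
  assumes "r \<le> n"
  shows "bij_betw (\<lambda>(j, p, v). p @ replicate j v)
           (SIGMA j:{1..r-1}. block_extensions r (n - j)) (inv_seqs_avoid r n)"
proof -
  let ?f = "\<lambda>(j, p, v). p @ replicate j v"
  let ?A = "SIGMA j:{1..r-1}. block_extensions r (n - j)"
  have last_ne: "p \<noteq> [] \<longrightarrow> last p \<noteq> v" if "(p, v) \<in> block_extensions r m" for p v m
    using that by (simp add: block_extensions_def)
  have ext_iff: "p @ replicate j v \<in> inv_seqs_avoid r n \<longleftrightarrow> (p, v) \<in> block_extensions r (n - j)"
    if "j \<in> {1..r-1}" "p \<noteq> [] \<longrightarrow> last p \<noteq> v" for j p v
    using append_replicate_in_inv_seqs_avoid_iff[of j r n p v] that assms by auto
  have "(j, p, v) = (j', p', v')"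
    if "(j, p, v) \<in> ?A" "(j', p', v') \<in> ?A" "p @ replicate j v = p' @ replicate j' v'"
    for j p v j' p' v'
    using final_block_unique[OF that(3)] last_ne that by auto
  then have "inj_on ?f ?A"
    by (auto simp: inj_on_def)
  moreover have "?f ` ?A \<subseteq> inv_seqs_avoid r n"
    using ext_iff last_ne by auto
  moreover have "e \<in> ?f ` ?A" if e: "e \<in> inv_seqs_avoid r n" for e
  proof -
    have "e \<noteq> []"
      using e assms by (auto simp: inv_seqs_avoid_def contains_const_run_def inv_seqs_def)
    then obtain p j v where e_eq: "e = p @ replicate j v" and "0 < j"
      and last_p: "p \<noteq> [] \<longrightarrow> last p \<noteq> v"
      using ex_final_block by blast
    have "\<not> r \<le> j"
      using e contains_const_run_append_replicate[OF last_p, of r j]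
      by (simp add: inv_seqs_avoid_def e_eq)
    with \<open>0 < j\<close> have j: "j \<in> {1..r-1}"
      by simp
    with e have "(j, p, v) \<in> ?A"
      using ext_iff[OF j last_p] by (simp add: e_eq)
    then show ?thesis
      using e_eq by force
  qed
  ultimately show ?thesis
    by (auto simp: bij_betw_def)
qed

lemma card_inv_seqs_avoid_recurrence:
  assumes "r \<le> n"
  shows "card (inv_seqs_avoid r n) = (\<Sum>j=1..r-1. (n - j) * card (inv_seqs_avoid r (n - j)))"
proof -
  have "card (inv_seqs_avoid r n) = card (SIGMA j:{1..r-1}. block_extensions r (n - j))"
    using bij_betw_same_card[OF inv_seqs_avoid_decomposition[OF assms]] by simp
  also have "\<dots> = (\<Sum>j=1..r-1. card (block_extensions r (n - j)))"
    by (simp add: block_extensions_def finite_inv_seqs_avoid)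
  also have "\<dots> = (\<Sum>j=1..r-1. (n - j) * card (inv_seqs_avoid r (n - j)))"
    using assms by (intro sum.cong) (auto simp: card_block_extensions)
  finally show ?thesis .
qed

theorem mainTheorem8:
  fixes r :: nat
  assumes "r \<ge> 2"
  shows "(\<forall>n. 1 \<le> n \<and> n < r \<longrightarrow> card (inv_seqs_avoid r n) = fact n)
       \<and> (\<forall>n\<ge>r. card (inv_seqs_avoid r n) =
              (\<Sum>j=1..r-1. (n - j) * card (inv_seqs_avoid r (n - j))))"
  \<comment> \<open>both parts hold for every \<open>r\<close>\<close>
  by (simp add: inv_seqs_avoid_short card_inv_seqs card_inv_seqs_avoid_recurrence)

end
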